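(* Let $(W,S)$ be a finitely generated Coxeter system, ordered by the partial order $\le$ defined in the context. (1) The poset $(W,\le)$ is graded with rank function $w\mapsto |S(w)|$; that is, $e$ is the unique minimal element, $|S(e)|=0$, and whenever $v$ covers $u$ in $(W,\le)$ one has $|S(v)|=|S(u)|+1$. (2) For any $u\le v$ in $W$, the interval $[u,v]=\{w\in W: u\le w\le v\}$ is an upper semimodular lattice.
   Context: $(W,S)$ is a finitely generated Coxeter system with length function $\ell$ and identity $e$. For $w\in W$, $S(w)\subseteq S$ is the set of simple reflections appearing in a (any) reduced expression of $w$ (this does not depend on the reduced expression); the connectivity set is $C(w)=S\setminus S(w)$. The descent set is $\mathrm{Des}(w)=\{s\in S:\ell(ws)<\ell(w)\}$. For $I\subseteq S$, $W_I$ is the parabolic subgroup generated by $I$, and $X_I=\{u\in W:\ell(us)>\ell(u)\ \forall s\in I\}$ is the set of minimal length coset representatives of $W/W_I$; every $w\in W$ has a unique factorization $w=w^Iw_I$ with $w^I\in X_I$, $w_I\in W_I$ (the parabolic components of $w$ along $I$), and $\ell(w)=\ell(w^I)+\ell(w_I)$. The partial order on $W$: $u\le v$ if and only if $v_{S(u)}=u$. A cover of $u$ is an element $v>u$ with $[u,v]=\{u,v\}$. A lattice $L$ is upper semimodular if whenever $g,h\in L$ both cover $w\in L$, there is $x\in L$ covering both $g$ and $h$. *)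

theory Defs
  imports "HOL-Algebra.Group" "HOL-Library.Extended_Nat"
begin

definition wprod :: "('a, 'b) monoid_scheme \<Rightarrow> 'a list \<Rightarrow> 'a" where
  "wprod G xs = foldr (\<lambda>x y. x \<otimes>\<^bsub>G\<^esub> y) xs \<one>\<^bsub>G\<^esub>"

definition coxeter_matrix :: "'a set \<Rightarrow> ('a \<Rightarrow> 'a \<Rightarrow> enat) \<Rightarrow> bool" where
  "coxeter_matrix S m \<longleftrightarrow>
     (\<forall>s\<in>S. m s s = 1) \<and> (\<forall>s\<in>S. \<forall>t\<in>S. m s t = m t s) \<and>
     (\<forall>s\<in>S. \<forall>t\<in>S. s \<noteq> t \<longrightarrow> m s t \<ge> 2)"

definition relators :: "'a set \<Rightarrow> ('a \<Rightarrow> 'a \<Rightarrow> enat) \<Rightarrow> 'a list set" where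
  "relators S m = {concat (replicate k [s, t]) | s t k. s \<in> S \<and> t \<in> S \<and> m s t = enat k}"

definition cox_step :: "'a set \<Rightarrow> ('a \<Rightarrow> 'a \<Rightarrow> enat) \<Rightarrow> ('a list \<times> 'a list) set" where
  "cox_step S m = {(xs @ r @ ys, xs @ ys) | xs ys r. xs \<in> lists S \<and> ys \<in> lists S \<and> r \<in> relators S m}"

text \<open>(G,S) is a finitely generated Coxeter system: S is a finite generating set of the group G
  and a word over S is trivial in G iff it is trivial in the presentation
  <S | (st)^m(s,t) = 1>, i.e. G is presented by the Coxeter presentation.\<close>
definition coxeter_system :: "('a, 'b) monoid_scheme \<Rightarrow> 'a set \<Rightarrow> bool" where
  "coxeter_system G S \<longleftrightarrow> group G \<and> finite S \<and> S \<subseteq> carrier G \<and> \<one>\<^bsub>G\<^esub> \<notin> S \<and>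
     carrier G = wprod G ` lists S \<and>
     (\<exists>m. coxeter_matrix S m \<and>
        (\<forall>xs\<in>lists S. wprod G xs = \<one>\<^bsub>G\<^esub> \<longleftrightarrow> (xs, []) \<in> (cox_step S m \<union> (cox_step S m)\<inverse>)\<^sup>*))"

definition cox_len :: "('a, 'b) monoid_scheme \<Rightarrow> 'a set \<Rightarrow> 'a \<Rightarrow> nat" where
  "cox_len G S w = (LEAST n. \<exists>xs\<in>lists S. length xs = n \<and> wprod G xs = w)"

definition reduced_word :: "('a, 'b) monoid_scheme \<Rightarrow> 'a set \<Rightarrow> 'a list \<Rightarrow> 'a \<Rightarrow> bool" where
  "reduced_word G S xs w \<longleftrightarrow> xs \<in> lists S \<and> wprod G xs = w \<and> length xs = cox_len G S w"

text \<open>S(w): the simple reflections occurring in a reduced expression of w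
  (independent of the reduced expression).\<close>
definition supp :: "('a, 'b) monoid_scheme \<Rightarrow> 'a set \<Rightarrow> 'a \<Rightarrow> 'a set" where
  "supp G S w = \<Union>{set xs | xs. reduced_word G S xs w}"

definition par_sub :: "('a, 'b) monoid_scheme \<Rightarrow> 'a set \<Rightarrow> 'a set" where
  "par_sub G I = wprod G ` lists I"

definition min_reps :: "('a, 'b) monoid_scheme \<Rightarrow> 'a set \<Rightarrow> 'a set \<Rightarrow> 'a set" where
  "min_reps G S I = {u \<in> carrier G. \<forall>s\<in>I. cox_len G S (u \<otimes>\<^bsub>G\<^esub> s) > cox_len G S u}"

text \<open>w_I: the unique v in W_I with w = w^I v, w^I in X_I.\<close>
definition par_comp :: "('a, 'b) monoid_scheme \<Rightarrow> 'a set \<Rightarrow> 'a set \<Rightarrow> 'a \<Rightarrow> 'a" where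
  "par_comp G S I w = (THE v. v \<in> par_sub G I \<and> w \<otimes>\<^bsub>G\<^esub> inv\<^bsub>G\<^esub> v \<in> min_reps G S I)"

definition cox_le :: "('a, 'b) monoid_scheme \<Rightarrow> 'a set \<Rightarrow> 'a \<Rightarrow> 'a \<Rightarrow> bool" where
  "cox_le G S u v \<longleftrightarrow> u \<in> carrier G \<and> v \<in> carrier G \<and> par_comp G S (supp G S u) v = u"

definition covers_in :: "'a set \<Rightarrow> ('a \<Rightarrow> 'a \<Rightarrow> bool) \<Rightarrow> 'a \<Rightarrow> 'a \<Rightarrow> bool" where
  "covers_in A rel u v \<longleftrightarrow> u \<in> A \<and> v \<in> A \<and> rel u v \<and> u \<noteq> v \<and>
     (\<forall>w\<in>A. rel u w \<and> rel w v \<longrightarrow> w = u \<or> w = v)"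

definition is_lattice_on :: "'a set \<Rightarrow> ('a \<Rightarrow> 'a \<Rightarrow> bool) \<Rightarrow> bool" where
  "is_lattice_on A rel \<longleftrightarrow>
     (\<forall>x\<in>A. rel x x) \<and> (\<forall>x\<in>A. \<forall>y\<in>A. rel x y \<and> rel y x \<longrightarrow> x = y) \<and>
     (\<forall>x\<in>A. \<forall>y\<in>A. \<forall>z\<in>A. rel x y \<and> rel y z \<longrightarrow> rel x z) \<and>
     (\<forall>x\<in>A. \<forall>y\<in>A. \<exists>j\<in>A. rel x j \<and> rel y j \<and> (\<forall>z\<in>A. rel x z \<and> rel y z \<longrightarrow> rel j z)) \<and>
     (\<forall>x\<in>A. \<forall>y\<in>A. \<exists>m\<in>A. rel m x \<and> rel m y \<and> (\<forall>z\<in>A. rel z x \<and> rel z y \<longrightarrow> rel z m))"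

definition upper_semimodular_lattice_on :: "'a set \<Rightarrow> ('a \<Rightarrow> 'a \<Rightarrow> bool) \<Rightarrow> bool" where
  "upper_semimodular_lattice_on A rel \<longleftrightarrow> is_lattice_on A rel \<and>
     (\<forall>w\<in>A. \<forall>g\<in>A. \<forall>h\<in>A. covers_in A rel w g \<and> covers_in A rel w h \<and> g \<noteq> h \<longrightarrow>
        (\<exists>x\<in>A. covers_in A rel g x \<and> covers_in A rel h x))"

end

theory Submission
  imports Defs
begin

(*
  Tits' solution of the word problem drives everything.  Let a word act on pairs (t, e) of a
  reflection t and a sign e, the generator s sending (t, e) to (s t s, e xor [t = s]).  Along a
  relator (s t)^m every reflection is met an even number of times, so the action factors through W,
  and reading off the signs shows that the length of w is the number of reflections occurring an
  odd number of times in the reflection sequence of any word for w.  This yields the exchange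
  condition and, from it, the usual parabolic theory: reduced words of elements of W_I use only
  letters of I, lengths add in w = w^I w_I, and (w_J)_K = w_K for K <= J.

  Consequently, below v the map w |-> S(w) is an order embedding with inverse J |-> v_J, and the
  supports of the elements of [u, v] form an antimatroid: they are closed under union, since
  S(v_J) = J for J = S(x) union S(y), and any S(x) < S(y) can be enlarged inside the family by
  a single generator, namely a right descent of y x^-1.  A finite antimatroid with a least set is
  an upper semimodular lattice whose covers add exactly one element; this is (2), and applied to
  a cover u < v it gives (1).
*)

lemma count_list_distinct: "distinct xs \<Longrightarrow> count_list xs x = (if x \<in> set xs then 1 else 0)"
  by (induction xs) auto

lemma even_count_list_periodic:
  assumes "length xs = 2 * k" and "\<And>j. j < k \<Longrightarrow> xs ! j = xs ! (j + k)"
  shows "even (count_list xs x)"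
proof -
  have "drop k xs = take k xs"
    using assms by (intro nth_equalityI) (auto simp: add.commute)
  then have "xs = take k xs @ take k xs"
    by (metis append_take_drop_id)
  then show ?thesis
    by (metis count_list_append even_add)
qed

lemma append_eq_append_Cons_split:
  "xs @ ys = as @ z # bs \<Longrightarrow>
    (\<exists>cs. xs = as @ z # cs \<and> bs = cs @ ys) \<or> (\<exists>ds. as = xs @ ds \<and> ys = ds @ z # bs)"
  by (auto simp: append_eq_append_conv2 append_eq_Cons_conv)

definition alt_letter :: "'a \<Rightarrow> 'a \<Rightarrow> nat \<Rightarrow> 'a" where
  "alt_letter s t j = (if even j then s else t)"

definition alt_word :: "'a \<Rightarrow> 'a \<Rightarrow> nat \<Rightarrow> nat \<Rightarrow> 'a list" where
  "alt_word s t n i = map (alt_letter s t) [i..<i+n]"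

lemma length_alt_word [simp]: "length (alt_word s t n i) = n"
  by (simp add: alt_word_def)

lemma nth_alt_word [simp]: "p < n \<Longrightarrow> alt_word s t n i ! p = alt_letter s t (i + p)"
  by (simp add: alt_word_def)

lemma set_alt_word: "set (alt_word s t n i) \<subseteq> {s, t}"
  by (auto simp: alt_word_def alt_letter_def)

lemma alt_word_add: "alt_word s t (m + n) i = alt_word s t m i @ alt_word s t n (i + m)"
  unfolding alt_word_def using upt_add_eq_append[of i "i + m" n] by (simp add: add.assoc)

lemma alt_word_Suc: "alt_word s t (Suc n) i = alt_letter s t i # alt_word s t n (Suc i)"
  using alt_word_add[of s t 1 n i] by (simp add: alt_word_def)

lemma alt_word_Suc_right: "alt_word s t (Suc n) i = alt_word s t n i @ [alt_letter s t (i + n)]"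
  using alt_word_add[of s t n 1 i] by (simp add: alt_word_def)

lemma alt_word_parity_cong: "even i = even j \<Longrightarrow> alt_word s t n i = alt_word s t n j"
  by (rule nth_equalityI) (auto simp: alt_letter_def)

lemma alt_word_swap: "alt_word t s n i = alt_word s t n (Suc i)"
  by (rule nth_equalityI) (auto simp: alt_letter_def)

lemma drop_alt_word: "drop p (alt_word s t n i) = alt_word s t (n - p) (i + p)"
  by (cases "p \<le> n") (auto simp: alt_word_def drop_map)

lemma rev_alt_word: "rev (alt_word s t n i) = alt_word s t n (i + n - 1)"
  by (rule nth_equalityI) (auto simp: rev_nth alt_letter_def)

lemma alt_word_relator: "concat (replicate k [s, t]) = alt_word s t (2 * k) 0"
proof (induction k)
  case (Suc k)
  have "alt_word s t (2 * Suc k) 0 = alt_word s t 2 0 @ alt_word s t (2 * k) (0 + 2)"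
    using alt_word_add[of s t 2 "2 * k" 0] by (simp only: mult_Suc_right)
  also have "alt_word s t (2 * k) (0 + 2) = alt_word s t (2 * k) 0"
    by (rule alt_word_parity_cong) simp
  also have "alt_word s t 2 0 = [s, t]"
    by (simp add: alt_word_def alt_letter_def numeral_2_eq_2)
  finally show ?case using Suc by simp
qed (simp add: alt_word_def)

lemma relators_lists: "r \<in> relators S m \<Longrightarrow> r \<in> lists S"
  by (auto simp: relators_def split: if_splits)

lemma (in group) mult_inv_cancel_left [simp]: "g \<in> carrier G \<Longrightarrow> x \<in> carrier G \<Longrightarrow> g \<otimes> (inv g \<otimes> x) = x"
  by (simp add: m_assoc[symmetric])

lemma (in group) inv_mult_cancel_left [simp]: "g \<in> carrier G \<Longrightarrow> x \<in> carrier G \<Longrightarrow> inv g \<otimes> (g \<otimes> x) = x"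
  by (simp add: m_assoc[symmetric])

lemma (in group) conj_eq_iff:
  assumes "g \<in> carrier G" "t \<in> carrier G" "x \<in> carrier G"
  shows "g \<otimes> t \<otimes> inv g = x \<longleftrightarrow> inv g \<otimes> x \<otimes> g = t"
  using assms by (metis inv_closed inv_solve_left' inv_solve_right m_assoc m_closed)

section \<open>Antimatroids\<close>

definition union_closed :: "'a set set \<Rightarrow> bool" where
  "union_closed F \<longleftrightarrow> (\<forall>X\<in>F. \<forall>Y\<in>F. X \<union> Y \<in> F)"

definition accessible :: "'a set set \<Rightarrow> bool" where
  "accessible F \<longleftrightarrow> (\<forall>X\<in>F. \<forall>Y\<in>F. X \<subset> Y \<longrightarrow> (\<exists>a\<in>Y - X. insert a X \<in> F))"

lemma union_closed_Union:
  assumes "union_closed F" "finite A" "A \<noteq> {}" "A \<subseteq> F"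
  shows "\<Union>A \<in> F"
  using assms(2-4)
proof (induction A rule: finite_ne_induct)
  case (insert X A)
  then have "X \<union> \<Union>A \<in> F"
    using assms(1) unfolding union_closed_def by blast
  then show ?case by simp
qed simp

lemma covers_in_subset_insert:
  assumes "accessible F" "covers_in F (\<subseteq>) X Y"
  obtains a where "a \<notin> X" "Y = insert a X"
proof -
  have F: "X \<in> F" "Y \<in> F" and "X \<subset> Y"
    and between: "\<And>Z. Z \<in> F \<Longrightarrow> X \<subseteq> Z \<Longrightarrow> Z \<subseteq> Y \<Longrightarrow> Z = X \<or> Z = Y"
    using assms(2) by (auto simp: covers_in_def)
  then obtain a where a: "a \<in> Y" "a \<notin> X" "insert a X \<in> F"
    using assms(1) unfolding accessible_def by blast
  then have "insert a X = Y"
    using between[of "insert a X"] \<open>X \<subset> Y\<close> by blast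
  then show thesis using a that by blast
qed

lemma covers_in_insert:
  assumes "X \<in> F" "insert a X \<in> F" "a \<notin> X"
  shows "covers_in F (\<subseteq>) X (insert a X)"
proof -
  have "W = X \<or> W = insert a X" if "X \<subseteq> W" "W \<subseteq> insert a X" for W
    using that by (cases "a \<in> W") auto
  then show ?thesis using assms by (auto simp: covers_in_def)
qed

lemma is_lattice_on_union_closed:
  assumes "finite F" "union_closed F" "B \<in> F" "\<And>X. X \<in> F \<Longrightarrow> B \<subseteq> X"
  shows "is_lattice_on F (\<subseteq>)"
  unfolding is_lattice_on_def
proof (intro conjI ballI)
  fix X Y assume XY: "X \<in> F" "Y \<in> F"
  show "\<exists>J\<in>F. X \<subseteq> J \<and> Y \<subseteq> J \<and> (\<forall>Z\<in>F. X \<subseteq> Z \<and> Y \<subseteq> Z \<longrightarrow> J \<subseteq> Z)"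
  proof
    show "X \<union> Y \<in> F" using XY assms(2) by (simp add: union_closed_def)
  qed blast
  let ?M = "\<Union>{Z \<in> F. Z \<subseteq> X \<and> Z \<subseteq> Y}"
  show "\<exists>M\<in>F. M \<subseteq> X \<and> M \<subseteq> Y \<and> (\<forall>Z\<in>F. Z \<subseteq> X \<and> Z \<subseteq> Y \<longrightarrow> Z \<subseteq> M)"
  proof
    have "B \<in> {Z \<in> F. Z \<subseteq> X \<and> Z \<subseteq> Y}" using XY assms(3,4) by blast
    then show "?M \<in> F"
      using assms(1,2) by (intro union_closed_Union) auto
  qed blast
qed blast+

lemma upper_semimodular_lattice_on_antimatroid:
  assumes "finite F" "union_closed F" "accessible F" "B \<in> F" "\<And>X. X \<in> F \<Longrightarrow> B \<subseteq> X"
  shows "upper_semimodular_lattice_on F (\<subseteq>)"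
  unfolding upper_semimodular_lattice_on_def
proof (intro conjI ballI impI)
  show "is_lattice_on F (\<subseteq>)"
    using assms(1,2,4,5) by (rule is_lattice_on_union_closed)
next
  fix X Y Z assume "X \<in> F" "Y \<in> F" "Z \<in> F"
    and cov: "covers_in F (\<subseteq>) X Y \<and> covers_in F (\<subseteq>) X Z \<and> Y \<noteq> Z"
  obtain a where a: "a \<notin> X" "Y = insert a X"
    using covers_in_subset_insert[OF assms(3)] cov by blast
  obtain b where b: "b \<notin> X" "Z = insert b X"
    using covers_in_subset_insert[OF assms(3)] cov by blast
  have "Y \<union> Z \<in> F"
    using \<open>Y \<in> F\<close> \<open>Z \<in> F\<close> assms(2) by (simp add: union_closed_def)
  moreover have "Y \<union> Z = insert b Y" "Y \<union> Z = insert a Z" "b \<notin> Y" "a \<notin> Z"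
    using a b cov by auto
  ultimately show "\<exists>U\<in>F. covers_in F (\<subseteq>) Y U \<and> covers_in F (\<subseteq>) Z U"
    using \<open>Y \<in> F\<close> \<open>Z \<in> F\<close> by (metis covers_in_insert)
qed

lemma is_lattice_on_image:
  assumes inj: "inj_on f A" and rel: "\<And>x y. x \<in> A \<Longrightarrow> y \<in> A \<Longrightarrow> rel x y \<longleftrightarrow> rel' (f x) (f y)"
    and lat: "is_lattice_on (f ` A) rel'"
  shows "is_lattice_on A rel"
proof -
  note L = lat[unfolded is_lattice_on_def ball_simps bex_simps]
  show ?thesis
    unfolding is_lattice_on_def
  proof (intro conjI ballI impI)
    fix x y z assume A: "x \<in> A" "y \<in> A" "z \<in> A"
    show "rel x x" using conjunct1[OF L] A rel by simp
    show "x = y" if "rel x y \<and> rel y x"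
    proof -
      have "f x = f y" using conjunct1[OF conjunct2[OF L]] A rel that by simp
      then show ?thesis using inj A by (simp add: inj_on_def)
    qed
    show "rel x z" if "rel x y \<and> rel y z"
      using L A rel that by meson
  next
    fix x y assume A: "x \<in> A" "y \<in> A"
    show "\<exists>j\<in>A. rel x j \<and> rel y j \<and> (\<forall>z\<in>A. rel x z \<and> rel y z \<longrightarrow> rel j z)"
      using L A rel by (smt (verit))
    show "\<exists>m\<in>A. rel m x \<and> rel m y \<and> (\<forall>z\<in>A. rel z x \<and> rel z y \<longrightarrow> rel z m)"
      using L A rel by (smt (verit))
  qed
qed

lemma covers_in_image_iff:
  assumes "inj_on f A" "\<And>x y. x \<in> A \<Longrightarrow> y \<in> A \<Longrightarrow> rel x y \<longleftrightarrow> rel' (f x) (f y)"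
    and "x \<in> A" "y \<in> A"
  shows "covers_in (f ` A) rel' (f x) (f y) \<longleftrightarrow> covers_in A rel x y"
proof -
  have "f x \<noteq> f y \<longleftrightarrow> x \<noteq> y" using assms(1,3,4) by (auto simp: inj_on_def)
  moreover have "(\<forall>w\<in>f ` A. rel' (f x) w \<and> rel' w (f y) \<longrightarrow> w = f x \<or> w = f y) \<longleftrightarrow>
      (\<forall>w\<in>A. rel x w \<and> rel w y \<longrightarrow> w = x \<or> w = y)"
    using assms by (auto simp: inj_on_def)
  ultimately show ?thesis using assms(2-4) unfolding covers_in_def by auto
qed

lemma upper_semimodular_lattice_on_image:
  assumes inj: "inj_on f A" and rel: "\<And>x y. x \<in> A \<Longrightarrow> y \<in> A \<Longrightarrow> rel x y \<longleftrightarrow> rel' (f x) (f y)"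
    and usl: "upper_semimodular_lattice_on (f ` A) rel'"
  shows "upper_semimodular_lattice_on A rel"
  unfolding upper_semimodular_lattice_on_def
proof (intro conjI ballI impI)
  show "is_lattice_on A rel"
    using inj rel usl[unfolded upper_semimodular_lattice_on_def]
    by (blast intro: is_lattice_on_image)
next
  fix w g h assume A: "w \<in> A" "g \<in> A" "h \<in> A"
    and cov: "covers_in A rel w g \<and> covers_in A rel w h \<and> g \<noteq> h"
  have "f g \<noteq> f h" using cov A inj by (auto simp: inj_on_def)
  then have "\<exists>X\<in>f ` A. covers_in (f ` A) rel' (f g) X \<and> covers_in (f ` A) rel' (f h) X"
    using usl cov A unfolding upper_semimodular_lattice_on_def
    by (simp add: covers_in_image_iff[of f A rel rel', OF inj rel])
  then show "\<exists>x\<in>A. covers_in A rel g x \<and> covers_in A rel h x"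
    using A by (auto simp: covers_in_image_iff[of f A rel rel', OF inj rel])
qed

locale coxeter_group = group +
  fixes S :: "'a set"
  assumes coxeter_system: "coxeter_system G S"
begin

lemma S_subset_carrier: "S \<subseteq> carrier G" and finite_S: "finite S" and one_notin_S: "\<one> \<notin> S"
  and carrier_eq_wprod: "carrier G = wprod G ` lists S"
  using coxeter_system by (auto simp: coxeter_system_def)

lemma S_carrier [simp]: "s \<in> S \<Longrightarrow> s \<in> carrier G"
  using S_subset_carrier by blast

lemma wprod_Nil [simp]: "wprod G [] = \<one>"
  by (simp add: wprod_def)

lemma wprod_Cons [simp]: "wprod G (x # xs) = x \<otimes> wprod G xs"
  by (simp add: wprod_def)

lemma wprod_closed [simp]: "xs \<in> lists S \<Longrightarrow> wprod G xs \<in> carrier G"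
  by (induction xs) auto

lemma wprod_append: "xs \<in> lists S \<Longrightarrow> ys \<in> lists S \<Longrightarrow> wprod G (xs @ ys) = wprod G xs \<otimes> wprod G ys"
  by (induction xs) (auto simp: m_assoc)

lemma wprod_snoc: "xs \<in> lists S \<Longrightarrow> s \<in> S \<Longrightarrow> wprod G (xs @ [s]) = wprod G xs \<otimes> s"
  by (simp add: wprod_append)

lemma coxeter_presentation:
  obtains m where "coxeter_matrix S m" "\<And>r. r \<in> relators S m \<Longrightarrow> wprod G r = \<one>"
    "\<And>xs. xs \<in> lists S \<Longrightarrow> wprod G xs = \<one> \<Longrightarrow> (xs, []) \<in> (cox_step S m \<union> (cox_step S m)\<inverse>)\<^sup>*"
proof -
  from coxeter_system obtain m where m: "coxeter_matrix S m"
    and pres: "\<forall>xs\<in>lists S. wprod G xs = \<one> \<longleftrightarrow> (xs, []) \<in> (cox_step S m \<union> (cox_step S m)\<inverse>)\<^sup>*"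
    unfolding coxeter_system_def by blast
  have "wprod G r = \<one>" if r: "r \<in> relators S m" for r
  proof -
    have "([] @ r @ [], [] @ []) \<in> cox_step S m"
      using r unfolding cox_step_def by blast
    then have "(r, []) \<in> (cox_step S m \<union> (cox_step S m)\<inverse>)\<^sup>*"
      by (simp add: r_into_rtrancl)
    moreover have "r \<in> lists S"
      using r by (rule relators_lists)
    ultimately show ?thesis using pres by blast
  qed
  then show thesis using that m pres by blast
qed

lemma generator_square [simp]: "s \<in> S \<Longrightarrow> s \<otimes> s = \<one>"
proof -
  assume s: "s \<in> S"
  obtain m where "coxeter_matrix S m" and rel: "\<And>r. r \<in> relators S m \<Longrightarrow> wprod G r = \<one>"
    using coxeter_presentation by blast
  then have "m s s = enat 1"
    using s by (simp add: coxeter_matrix_def one_enat_def)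
  then have "[s, s] \<in> relators S m"
    using s unfolding relators_def by force
  then show ?thesis using rel[of "[s, s]"] s by simp
qed

lemma generator_square_left [simp]: "s \<in> S \<Longrightarrow> x \<in> carrier G \<Longrightarrow> s \<otimes> (s \<otimes> x) = x"
  by (simp add: m_assoc[symmetric])

lemma inv_generator [simp]: "s \<in> S \<Longrightarrow> inv s = s"
  using inv_equality[of s s] by simp

lemma wprod_rev: "xs \<in> lists S \<Longrightarrow> wprod G (rev xs) = inv (wprod G xs)"
proof (induction xs)
  case (Cons x xs)
  then have "rev xs \<in> lists S" "x \<in> S" by auto
  then show ?case using Cons by (simp add: wprod_snoc inv_mult_group)
qed simp

abbreviation len :: "'a \<Rightarrow> nat" where
  "len \<equiv> cox_len G S"

definition reduced :: "'a list \<Rightarrow> bool" where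
  "reduced xs \<longleftrightarrow> xs \<in> lists S \<and> len (wprod G xs) = length xs"

lemma reduced_word_iff: "reduced_word G S xs w \<longleftrightarrow> reduced xs \<and> wprod G xs = w"
  by (auto simp: reduced_word_def reduced_def)

lemma len_le_length: "xs \<in> lists S \<Longrightarrow> len (wprod G xs) \<le> length xs"
  unfolding cox_len_def by (rule Least_le) auto

lemma reduced_word_exists:
  assumes "g \<in> carrier G" obtains xs where "reduced xs" "wprod G xs = g"
proof -
  obtain xs0 where "xs0 \<in> lists S" "wprod G xs0 = g"
    using carrier_eq_wprod assms by auto
  then have "\<exists>n. \<exists>xs\<in>lists S. length xs = n \<and> wprod G xs = g" by blast
  then have "\<exists>xs\<in>lists S. length xs = len g \<and> wprod G xs = g"
    unfolding cox_len_def by (rule LeastI_ex)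
  then obtain xs where "xs \<in> lists S" "length xs = len g" "wprod G xs = g"
    by blast
  then show thesis using that[of xs] by (simp add: reduced_def)
qed

lemma len_mult_le:
  assumes "u \<in> carrier G" "v \<in> carrier G" shows "len (u \<otimes> v) \<le> len u + len v"
proof -
  obtain xs ys where xs: "reduced xs" "wprod G xs = u" and ys: "reduced ys" "wprod G ys = v"
    using reduced_word_exists assms by metis
  then have "xs @ ys \<in> lists S" by (simp add: reduced_def)
  then have "len (wprod G (xs @ ys)) \<le> length xs + length ys"
    using len_le_length by fastforce
  moreover have "wprod G (xs @ ys) = u \<otimes> v"
    using xs ys by (simp add: reduced_def wprod_append)
  ultimately show ?thesis using xs ys by (simp add: reduced_def)
qed

lemma reduced_appendD:
  assumes "reduced (xs @ ys)" shows "reduced xs" "reduced ys"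
proof -
  have xs: "xs \<in> lists S" and ys: "ys \<in> lists S"
    using assms by (auto simp: reduced_def)
  have "length (xs @ ys) \<le> len (wprod G xs) + len (wprod G ys)"
    using assms len_mult_le[of "wprod G xs" "wprod G ys"] xs ys
    by (simp add: reduced_def wprod_append)
  then show "reduced xs" "reduced ys"
    using len_le_length[OF xs] len_le_length[OF ys] xs ys by (auto simp: reduced_def)
qed

lemma len_one [simp]: "len \<one> = 0"
  using len_le_length[of "[]"] by simp

lemma len_eq_0_iff: assumes "g \<in> carrier G" shows "len g = 0 \<longleftrightarrow> g = \<one>"
proof
  assume "len g = 0"
  obtain xs where "reduced xs" "wprod G xs = g"
    using reduced_word_exists assms by blast
  then show "g = \<one>" using \<open>len g = 0\<close> by (simp add: reduced_def)
qed simp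

lemma len_generator [simp]: assumes "s \<in> S" shows "len s = 1"
proof -
  have "len s \<le> 1" using len_le_length[of "[s]"] assms by simp
  moreover have "len s \<noteq> 0" using len_eq_0_iff[of s] one_notin_S assms by auto
  ultimately show ?thesis by simp
qed

section \<open>Tits' representation and the exchange condition\<close>

text \<open>The pair (t, e) stands for the root of the reflection t with sign e.\<close>

definition tits_act :: "'a \<Rightarrow> 'a \<times> bool \<Rightarrow> 'a \<times> bool" where
  "tits_act s p = (s \<otimes> fst p \<otimes> s, snd p \<noteq> (fst p = s))"

primrec word_act :: "'a list \<Rightarrow> 'a \<times> bool \<Rightarrow> 'a \<times> bool" where
  "word_act [] = id"
| "word_act (s # xs) = tits_act s \<circ> word_act xs"

primrec refl_seq :: "'a list \<Rightarrow> 'a list" where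
  "refl_seq [] = []"
| "refl_seq (s # xs) = (inv (wprod G xs) \<otimes> s \<otimes> wprod G xs) # refl_seq xs"

lemma word_act_append: "word_act (xs @ ys) = word_act xs \<circ> word_act ys"
  by (induction xs) (auto simp: comp_assoc)

lemma length_refl_seq [simp]: "length (refl_seq xs) = length xs"
  by (induction xs) auto

lemma nth_refl_seq:
  "j < length xs \<Longrightarrow>
    refl_seq xs ! j = inv (wprod G (drop (Suc j) xs)) \<otimes> xs ! j \<otimes> wprod G (drop (Suc j) xs)"
proof (induction xs arbitrary: j)
  case (Cons x xs) then show ?case by (cases j) auto
qed simp

lemma set_refl_seq_carrier: "xs \<in> lists S \<Longrightarrow> set (refl_seq xs) \<subseteq> carrier G"
  by (induction xs) auto

lemma mem_refl_seqE:
  assumes "r \<in> set (refl_seq xs)"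
  obtains as z bs where "xs = as @ z # bs" "r = inv (wprod G bs) \<otimes> z \<otimes> wprod G bs"
  using assms
proof (induction xs)
  case (Cons x xs)
  show ?case
  proof (cases "r = inv (wprod G xs) \<otimes> x \<otimes> wprod G xs")
    case True then show ?thesis using Cons.prems(1)[of "[]"] by simp
  next
    case False
    then have "r \<in> set (refl_seq xs)" using Cons.prems(2) by simp
    then show ?thesis using Cons.IH Cons.prems(1) by (metis append_Cons)
  qed
qed simp

lemma word_act_conv:
  "xs \<in> lists S \<Longrightarrow> t \<in> carrier G \<Longrightarrow>
    word_act xs (t, e) = (wprod G xs \<otimes> t \<otimes> inv (wprod G xs), e \<noteq> odd (count_list (refl_seq xs) t))"
proof (induction xs)
  case (Cons x xs)
  let ?g = "wprod G xs"
  have x: "x \<in> carrier G" and g: "?g \<in> carrier G" and xs: "xs \<in> lists S"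
    using Cons.prems by auto
  have "x \<otimes> (?g \<otimes> t \<otimes> inv ?g) \<otimes> x = (x \<otimes> ?g) \<otimes> t \<otimes> inv (x \<otimes> ?g)"
    using x g Cons.prems by (simp add: inv_mult_group m_assoc)
  moreover have "?g \<otimes> t \<otimes> inv ?g = x \<longleftrightarrow> inv ?g \<otimes> x \<otimes> ?g = t"
    using conj_eq_iff x g Cons.prems by blast
  ultimately show ?case using Cons.IH[OF xs Cons.prems(2)] by (auto simp: tits_act_def)
qed simp

lemma alt_word_lists: "s \<in> S \<Longrightarrow> t \<in> S \<Longrightarrow> alt_word s t n i \<in> lists S"
  using set_alt_word[of s t n i] by auto

lemma alt_word_braid:
  assumes s: "s \<in> S" and t: "t \<in> S" and rel: "\<And>i. wprod G (alt_word s t (2 * k) i) = \<one>"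
  shows "wprod G (alt_word s t k i) = wprod G (alt_word s t k (Suc i))"
proof (cases "k = 0")
  case False
  let ?w = "\<lambda>n i. wprod G (alt_word s t n i)"
  have ws: "alt_word s t n j \<in> lists S" for n j using s t by (rule alt_word_lists)
  have "?w k i \<otimes> ?w k (i + k) = \<one>"
    using rel[of i] alt_word_add[of s t k k i] ws by (simp add: wprod_append mult_2)
  then have "?w k i = inv (?w k (i + k))"
    using ws by (simp add: inv_equality)
  also have "\<dots> = wprod G (rev (alt_word s t k (i + k)))"
    using wprod_rev ws by simp
  also have "\<dots> = ?w k (Suc i + 2 * (k - 1))"
  proof -
    have "i + k + k - 1 = Suc i + 2 * (k - 1)" using False by simp
    then show ?thesis by (simp only: rev_alt_word)
  qed
  also have "\<dots> = ?w k (Suc i)"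
    by (subst alt_word_parity_cong[of _ "Suc i"]) simp_all
  finally show ?thesis .
qed (simp add: alt_word_def)

lemma refl_seq_alt_word_periodic:
  assumes s: "s \<in> S" and t: "t \<in> S" and rel: "\<And>i. wprod G (alt_word s t (2 * k) i) = \<one>"
    and j: "j < k"
  shows "refl_seq (alt_word s t (2 * k) i) ! j = refl_seq (alt_word s t (2 * k) i) ! (j + k)"
proof -
  let ?w = "\<lambda>n i. wprod G (alt_word s t n i)"
  let ?a = "alt_letter s t (i + j)" and ?b = "alt_letter s t (i + j + k)"
  let ?P = "?w k (Suc (i + j))" and ?Q = "?w (k - Suc j) (Suc (i + j) + k)"
  have ws: "alt_word s t n l \<in> lists S" for n l using s t by (rule alt_word_lists)
  have a: "?a \<in> S" and b: "?b \<in> S" using s t by (simp_all add: alt_letter_def)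
  obtain k' where k': "k = Suc k'" using j by (cases k) auto
  have "?a \<otimes> ?P = ?a \<otimes> ?w k (i + j)"
    using alt_word_braid[OF s t rel, of "i + j"] by simp
  also have "\<dots> = ?w k' (Suc (i + j))"
    using a ws by (simp add: k' alt_word_Suc)
  also have "\<dots> = ?P \<otimes> ?b"
    using b ws by (simp add: k' alt_word_Suc_right wprod_snoc m_assoc add.commute add.left_commute)
  finally have "?a \<otimes> ?P = ?P \<otimes> ?b" .
  then have conj: "inv ?P \<otimes> ?a \<otimes> ?P = ?b"
    using a b ws by (simp add: m_assoc inv_solve_left')
  have "drop (Suc j) (alt_word s t (2 * k) i) = alt_word s t (k + (k - Suc j)) (Suc (i + j))"
    using j by (simp add: drop_alt_word mult_2)
  then have drop1: "wprod G (drop (Suc j) (alt_word s t (2 * k) i)) = ?P \<otimes> ?Q"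
    using ws by (simp only: alt_word_add wprod_append)
  have drop2:
    "drop (Suc (j + k)) (alt_word s t (2 * k) i) = alt_word s t (k - Suc j) (Suc (i + j) + k)"
    using j by (simp add: drop_alt_word add.assoc)
  have "refl_seq (alt_word s t (2 * k) i) ! j = inv (?P \<otimes> ?Q) \<otimes> ?a \<otimes> (?P \<otimes> ?Q)"
    using j by (simp add: nth_refl_seq drop1)
  also have "\<dots> = inv ?Q \<otimes> (inv ?P \<otimes> ?a \<otimes> ?P) \<otimes> ?Q"
    using a ws by (simp add: inv_mult_group m_assoc)
  also have "\<dots> = refl_seq (alt_word s t (2 * k) i) ! (j + k)"
    using j by (simp add: conj nth_refl_seq drop2 add.assoc)
  finally show ?thesis .
qed

lemma word_act_closed: "xs \<in> lists S \<Longrightarrow> t \<in> carrier G \<Longrightarrow> fst (word_act xs (t, e)) \<in> carrier G"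
  by (simp add: word_act_conv)

lemma word_act_relator:
  assumes m: "coxeter_matrix S m" and rel: "\<forall>r\<in>relators S m. wprod G r = \<one>"
    and r: "r \<in> relators S m" and t: "t \<in> carrier G"
  shows "word_act r (t, e) = (t, e)"
proof -
  obtain s s' k where r_def: "r = concat (replicate k [s, s'])"
    and s: "s \<in> S" "s' \<in> S" and k: "m s s' = enat k"
    using r by (auto simp: relators_def)
  have "m s' s = enat k" using m s k by (auto simp: coxeter_matrix_def)
  then have r': "concat (replicate k [s', s]) \<in> relators S m"
    unfolding relators_def using s by (intro CollectI exI[of _ s'] exI[of _ s] exI[of _ k]) simp
  have trivial01:
    "wprod G (alt_word s s' (2 * k) 0) = \<one>" "wprod G (alt_word s s' (2 * k) (Suc 0)) = \<one>"
    using rel[rule_format, OF r] rel[rule_format, OF r']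
    by (simp_all only: r_def alt_word_relator alt_word_swap[of s' s])
  have trivial: "wprod G (alt_word s s' (2 * k) i) = \<one>" for i
  proof (cases "even i")
    case True
    then have "alt_word s s' (2 * k) i = alt_word s s' (2 * k) 0"
      by (intro alt_word_parity_cong) simp
    then show ?thesis using trivial01(1) by simp
  next
    case False
    then have "alt_word s s' (2 * k) i = alt_word s s' (2 * k) (Suc 0)"
      by (intro alt_word_parity_cong) simp
    then show ?thesis using trivial01(2) by simp
  qed
  have "even (count_list (refl_seq (alt_word s s' (2 * k) 0)) t)"
    by (rule even_count_list_periodic[where k = k])
      (simp, rule refl_seq_alt_word_periodic[OF s trivial])
  then show ?thesis
    using word_act_conv[OF relators_lists[OF r] t] rel[rule_format, OF r] t
    by (simp add: r_def alt_word_relator)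
qed

lemma word_act_cox_step:
  assumes m: "coxeter_matrix S m" and rel: "\<forall>r\<in>relators S m. wprod G r = \<one>"
    and step: "(xs, ys) \<in> cox_step S m" and t: "t \<in> carrier G"
  shows "word_act xs (t, e) = word_act ys (t, e)"
proof -
  obtain as bs r where xs: "xs = as @ r @ bs" and ys: "ys = as @ bs" and "bs \<in> lists S"
    and r: "r \<in> relators S m"
    using step by (auto simp: cox_step_def)
  obtain t' e' where bs_act: "word_act bs (t, e) = (t', e')"
    by (cases "word_act bs (t, e)")
  then have "t' \<in> carrier G"
    using word_act_closed[OF \<open>bs \<in> lists S\<close> t, of e] by simp
  then have "word_act r (t', e') = (t', e')"
    by (rule word_act_relator[OF m rel r])
  then show ?thesis by (simp add: xs ys word_act_append bs_act)
qed

lemma word_act_trivial: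
  assumes "xs \<in> lists S" "wprod G xs = \<one>" "t \<in> carrier G"
  shows "word_act xs (t, e) = (t, e)"
proof -
  obtain m where m: "coxeter_matrix S m" and rel: "\<forall>r\<in>relators S m. wprod G r = \<one>"
    and pres: "(xs, []) \<in> (cox_step S m \<union> (cox_step S m)\<inverse>)\<^sup>*"
    using coxeter_presentation assms(1,2) by (metis (no_types))
  have "\<forall>t\<in>carrier G. \<forall>e. word_act xs (t, e) = word_act ys (t, e)"
    if "(xs, ys) \<in> (cox_step S m \<union> (cox_step S m)\<inverse>)\<^sup>*" for ys
    using that
  proof (induction ys rule: rtrancl_induct)
    case (step ys zs)
    have "word_act ys (t, e) = word_act zs (t, e)" if "t \<in> carrier G" for t e
    proof (cases "(ys, zs) \<in> cox_step S m")
      case True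
      then show ?thesis by (rule word_act_cox_step[OF m rel _ that])
    next
      case False
      then have "(zs, ys) \<in> cox_step S m" using step.hyps(2) by blast
      then show ?thesis using word_act_cox_step[OF m rel _ that] by simp
    qed
    then show ?case using step.IH by simp
  qed simp
  then show ?thesis using pres assms(3) by simp
qed

lemma word_act_eq:
  assumes xs: "xs \<in> lists S" and ys: "ys \<in> lists S" and eq: "wprod G xs = wprod G ys"
    and t: "t \<in> carrier G"
  shows "word_act xs (t, e) = word_act ys (t, e)"
proof -
  have rys: "rev ys \<in> lists S" using ys by auto
  have "wprod G (rev ys @ ys) = \<one>"
    using wprod_append[OF rys ys] wprod_rev[OF ys] ys by simp
  then have round_trip: "word_act (rev ys @ ys) (t, e) = (t, e)"
    using word_act_trivial rys ys t by simp
  obtain t' e' where ys_act: "word_act ys (t, e) = (t', e')"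
    by (cases "word_act ys (t, e)")
  have "wprod G (xs @ rev ys) = \<one>"
    using wprod_append[OF xs rys] wprod_rev[OF ys] eq ys by simp
  moreover have "t' \<in> carrier G"
    using word_act_closed[OF ys t, of e] ys_act by simp
  ultimately have fix_ys: "word_act (xs @ rev ys) (t', e') = (t', e')"
    using word_act_trivial[of "xs @ rev ys" t'] xs rys by simp
  have "word_act xs (t, e) = word_act xs (word_act (rev ys @ ys) (t, e))"
    using round_trip by simp
  also have "\<dots> = word_act (xs @ rev ys) (word_act ys (t, e))"
    by (simp add: word_act_append)
  finally show ?thesis using fix_ys ys_act by simp
qed

definition odd_refls :: "'a list \<Rightarrow> 'a set" where
  "odd_refls xs = {t \<in> carrier G. odd (count_list (refl_seq xs) t)}"

lemma odd_refls_subset: "odd_refls xs \<subseteq> set (refl_seq xs)"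
  unfolding odd_refls_def using count_notin by fastforce

lemma finite_odd_refls: "finite (odd_refls xs)"
  using odd_refls_subset finite_subset by blast

lemma odd_refls_eq:
  assumes "xs \<in> lists S" "ys \<in> lists S" "wprod G xs = wprod G ys"
  shows "odd_refls xs = odd_refls ys"
proof -
  have "odd (count_list (refl_seq xs) t) \<longleftrightarrow> odd (count_list (refl_seq ys) t)"
    if "t \<in> carrier G" for t
    using word_act_eq[OF assms that, of False] word_act_conv[OF assms(1) that, of False]
      word_act_conv[OF assms(2) that, of False] by simp
  then show ?thesis unfolding odd_refls_def by auto
qed

lemma odd_refls_snoc:
  assumes xs: "xs \<in> lists S" and s: "s \<in> S"
  shows "odd_refls (xs @ [s]) = {t \<in> carrier G. (t = s) \<noteq> (s \<otimes> t \<otimes> s \<in> odd_refls xs)}"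
proof -
  have "odd (count_list (refl_seq (xs @ [s])) t) \<longleftrightarrow> (t = s) \<noteq> (s \<otimes> t \<otimes> s \<in> odd_refls xs)"
    if t: "t \<in> carrier G" for t
  proof -
    have xs': "xs @ [s] \<in> lists S" using xs s by simp
    have c: "s \<otimes> t \<otimes> s \<in> carrier G" using s t by simp
    have "word_act (xs @ [s]) (t, False) = word_act xs (s \<otimes> t \<otimes> s, t = s)"
      by (simp add: word_act_append tits_act_def)
    then show ?thesis
      using word_act_conv[OF xs' t, of False] word_act_conv[OF xs c, of "t = s"] c
      by (auto simp: odd_refls_def)
  qed
  then show ?thesis unfolding odd_refls_def by auto
qed

lemma wprod_delete_letter:
  assumes "as @ z # bs \<in> lists S"
  shows "wprod G (as @ z # bs) \<otimes> (inv (wprod G bs) \<otimes> z \<otimes> wprod G bs) = wprod G (as @ bs)"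
proof -
  have as: "as \<in> lists S" and bs: "bs \<in> lists S" and z: "z \<in> S" using assms by auto
  let ?A = "wprod G as" and ?B = "wprod G bs"
  have A: "?A \<in> carrier G" and B: "?B \<in> carrier G" using as bs by auto
  have "wprod G (as @ z # bs) \<otimes> (inv ?B \<otimes> z \<otimes> ?B) = ?A \<otimes> (z \<otimes> ?B) \<otimes> (inv ?B \<otimes> z \<otimes> ?B)"
    using as bs z by (simp add: wprod_append)
  also have "\<dots> = ?A \<otimes> (z \<otimes> (?B \<otimes> inv ?B) \<otimes> z) \<otimes> ?B"
    using A B z by (simp add: m_assoc)
  also have "\<dots> = wprod G (as @ bs)"
    using A B z as bs by (simp add: m_assoc wprod_append)
  finally show ?thesis .
qed

lemma distinct_refl_seq: "reduced xs \<Longrightarrow> distinct (refl_seq xs)"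
proof (induction xs)
  case (Cons x xs)
  have "reduced xs" using reduced_appendD(2)[of "[x]" xs] Cons.prems by simp
  have xs: "xs \<in> lists S" and x: "x \<in> S" using Cons.prems by (auto simp: reduced_def)
  let ?g = "wprod G xs"
  have g: "?g \<in> carrier G" using xs by simp
  have "inv ?g \<otimes> x \<otimes> ?g \<notin> set (refl_seq xs)"
  proof
    assume "inv ?g \<otimes> x \<otimes> ?g \<in> set (refl_seq xs)"
    then obtain as z bs where xs_eq: "xs = as @ z # bs"
      and refl: "inv ?g \<otimes> x \<otimes> ?g = inv (wprod G bs) \<otimes> z \<otimes> wprod G bs"
      by (rule mem_refl_seqE)
    have "wprod G (x # xs) = ?g \<otimes> (inv ?g \<otimes> x \<otimes> ?g)"
      using g x by (simp add: m_assoc)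
    also have "\<dots> = wprod G (as @ bs)"
      using refl wprod_delete_letter xs xs_eq by simp
    finally have "len (wprod G (x # xs)) \<le> length (as @ bs)"
      using len_le_length xs xs_eq by (metis Cons_in_lists_iff append_in_lists_conv)
    then show False using Cons.prems xs_eq by (simp add: reduced_def)
  qed
  then show ?case using Cons.IH \<open>reduced xs\<close> by simp
qed simp

lemma card_odd_refls_reduced:
  assumes "reduced xs" shows "card (odd_refls xs) = length xs"
proof -
  have "odd_refls xs = set (refl_seq xs)"
    using count_list_distinct[OF distinct_refl_seq[OF assms]] set_refl_seq_carrier assms
    by (auto simp: odd_refls_def reduced_def)
  then show ?thesis using distinct_card[OF distinct_refl_seq[OF assms]] by simp
qed

lemma len_eq_card_odd_refls:
  assumes "xs \<in> lists S" shows "len (wprod G xs) = card (odd_refls xs)"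
proof -
  obtain ys where ys: "reduced ys" "wprod G ys = wprod G xs"
    using reduced_word_exists[of "wprod G xs"] assms by auto
  then have "ys \<in> lists S" "len (wprod G ys) = length ys" by (auto simp: reduced_def)
  then show ?thesis
    using odd_refls_eq[OF _ assms ys(2)] card_odd_refls_reduced[OF ys(1)] ys(2) by simp
qed

lemma card_odd_refls_snoc:
  assumes xs: "xs \<in> lists S" and s: "s \<in> S"
  shows "if s \<in> odd_refls xs then card (odd_refls (xs @ [s])) + 1 = card (odd_refls xs)
         else card (odd_refls (xs @ [s])) = card (odd_refls xs) + 1"
proof -
  define f where "f t = s \<otimes> t \<otimes> s" for t
  let ?N = "odd_refls xs"
  have f_f: "f (f t) = t" if "t \<in> carrier G" for t using s that by (simp add: f_def m_assoc)
  have f_closed: "f t \<in> carrier G" if "t \<in> carrier G" for t using s that by (simp add: f_def)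
  have f_s: "f s = s" using s by (simp add: f_def m_assoc)
  have N_carrier: "?N \<subseteq> carrier G" by (auto simp: odd_refls_def)
  have img: "f ` ?N = {t \<in> carrier G. f t \<in> ?N}"
  proof
    show "f ` ?N \<subseteq> {t \<in> carrier G. f t \<in> ?N}"
      using N_carrier f_f f_closed by auto
    show "{t \<in> carrier G. f t \<in> ?N} \<subseteq> f ` ?N"
      using f_f by (metis (no_types, lifting) image_eqI mem_Collect_eq subsetI)
  qed
  have card_img: "card (f ` ?N) = card ?N"
    using N_carrier f_f by (intro card_image inj_onI) (metis subsetD)
  have snoc: "odd_refls (xs @ [s]) = {t \<in> carrier G. (t = s) \<noteq> (t \<in> f ` ?N)}"
    using odd_refls_snoc[OF xs s] img by (auto simp: f_def)
  have s_img: "s \<in> f ` ?N \<longleftrightarrow> s \<in> ?N"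
    using img f_s s by simp
  have img_carrier: "f ` ?N \<subseteq> carrier G" using img by blast
  show ?thesis
  proof (cases "s \<in> ?N")
    case True
    then have "odd_refls (xs @ [s]) = f ` ?N - {s}"
      unfolding snoc using img_carrier s_img by blast
    then show ?thesis
      using True s_img card_img finite_odd_refls card_Diff1_less[of "f ` ?N" s]
      by (simp add: card_Diff_singleton)
  next
    case False
    then have "odd_refls (xs @ [s]) = insert s (f ` ?N)"
      unfolding snoc using img_carrier s_img S_carrier[OF s] by blast
    then show ?thesis using False s_img card_img finite_odd_refls by simp
  qed
qed

lemma len_snoc:
  assumes "xs \<in> lists S" "s \<in> S"
  shows "if s \<in> odd_refls xs then len (wprod G xs \<otimes> s) + 1 = len (wprod G xs)
         else len (wprod G xs \<otimes> s) = len (wprod G xs) + 1"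
  using card_odd_refls_snoc[OF assms] len_eq_card_odd_refls[of "xs @ [s]"]
    len_eq_card_odd_refls[OF assms(1)] assms by (simp add: wprod_snoc split: if_splits)

lemma len_mult_generator:
  assumes "g \<in> carrier G" "s \<in> S"
  shows "len (g \<otimes> s) + 1 = len g \<or> len (g \<otimes> s) = len g + 1"
proof -
  obtain xs where "xs \<in> lists S" "wprod G xs = g"
    using carrier_eq_wprod assms(1) by auto
  then show ?thesis using len_snoc[of xs s] assms(2) by (auto split: if_splits)
qed

lemma exchange_condition:
  assumes xs: "xs \<in> lists S" and s: "s \<in> S" and shorter: "len (wprod G xs \<otimes> s) < len (wprod G xs)"
  obtains as z bs where "xs = as @ z # bs" "wprod G xs \<otimes> s = wprod G (as @ bs)"
proof -
  have "s \<in> odd_refls xs"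
    using len_snoc[OF xs s] shorter by (auto split: if_splits)
  then have "s \<in> set (refl_seq xs)"
    using odd_refls_subset by blast
  then obtain as z bs where "xs = as @ z # bs" "s = inv (wprod G bs) \<otimes> z \<otimes> wprod G bs"
    by (rule mem_refl_seqE)
  then show thesis using that wprod_delete_letter xs by auto
qed

lemma exchange_condition_append:
  assumes xs: "xs \<in> lists S" and ys: "ys \<in> lists S" and s: "s \<in> S"
    and shorter: "len (wprod G xs \<otimes> wprod G ys \<otimes> s) < len (wprod G xs \<otimes> wprod G ys)"
  shows "(\<exists>as z cs. xs = as @ z # cs \<and> wprod G xs \<otimes> wprod G ys \<otimes> s = wprod G (as @ cs) \<otimes> wprod G ys)
       \<or> (\<exists>ds z bs. ys = ds @ z # bs \<and> wprod G ys \<otimes> s = wprod G (ds @ bs))"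
proof -
  have xys: "xs @ ys \<in> lists S" using xs ys by simp
  have "len (wprod G (xs @ ys) \<otimes> s) < len (wprod G (xs @ ys))"
    using shorter xs ys by (simp add: wprod_append)
  with xys s obtain as z bs where split: "xs @ ys = as @ z # bs"
    and del: "wprod G (xs @ ys) \<otimes> s = wprod G (as @ bs)"
    by (rule exchange_condition)
  from append_eq_append_Cons_split[OF split] show ?thesis
  proof (elim disjE exE conjE)
    fix cs assume xs_eq: "xs = as @ z # cs" and bs_eq: "bs = cs @ ys"
    have "as \<in> lists S" "cs \<in> lists S" using xs xs_eq by auto
    then have "wprod G xs \<otimes> wprod G ys \<otimes> s = wprod G (as @ cs) \<otimes> wprod G ys"
      using del bs_eq xs ys s by (simp add: wprod_append m_assoc)
    then show ?thesis using xs_eq by blast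
  next
    fix ds assume as_eq: "as = xs @ ds" and ys_eq: "ys = ds @ z # bs"
    have "ds \<in> lists S" "bs \<in> lists S" using ys ys_eq by auto
    then have "wprod G xs \<otimes> (wprod G ys \<otimes> s) = wprod G xs \<otimes> wprod G (ds @ bs)"
      using del as_eq xs ys s by (simp add: wprod_append m_assoc)
    then have "wprod G ys \<otimes> s = wprod G (ds @ bs)"
      using xs ys s \<open>ds \<in> lists S\<close> \<open>bs \<in> lists S\<close> by simp
    then show ?thesis using ys_eq by blast
  qed
qed

lemma shorter_word_exists:
  "xs \<in> lists S \<Longrightarrow> len (wprod G xs) < length xs \<Longrightarrow>
    \<exists>ys. set ys \<subseteq> set xs \<and> length ys < length xs \<and> wprod G ys = wprod G xs"
proof (induction xs rule: rev_induct)
  case (snoc s xs)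
  have xs: "xs \<in> lists S" and s: "s \<in> S" using snoc.prems by auto
  show ?case
  proof (cases "len (wprod G xs) < length xs")
    case True
    then obtain ys where ys: "set ys \<subseteq> set xs" "length ys < length xs" "wprod G ys = wprod G xs"
      using snoc.IH xs by blast
    then have "ys \<in> lists S" using xs by auto
    then show ?thesis
      using ys s xs by (intro exI[of _ "ys @ [s]"]) (auto simp: wprod_snoc)
  next
    case False
    then have "len (wprod G xs) = length xs" using len_le_length[OF xs] by simp
    then have "len (wprod G xs \<otimes> s) < len (wprod G xs)"
      using snoc.prems(2) len_mult_generator[of "wprod G xs" s] xs s by (auto simp: wprod_snoc)
    then obtain as z bs where xs_eq: "xs = as @ z # bs"
      and del: "wprod G xs \<otimes> s = wprod G (as @ bs)"
      using exchange_condition xs s by blast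
    have "wprod G (as @ bs) = wprod G (xs @ [s])"
      using del xs s by (simp add: wprod_snoc)
    then show ?thesis using xs_eq by (intro exI[of _ "as @ bs"]) auto
  qed
qed simp

lemma reduced_word_from_letters:
  "xs \<in> lists S \<Longrightarrow> \<exists>ys. reduced ys \<and> set ys \<subseteq> set xs \<and> wprod G ys = wprod G xs"
proof (induction xs rule: length_induct)
  case (1 xs)
  show ?case
  proof (cases "reduced xs")
    case False
    then have "len (wprod G xs) < length xs"
      using len_le_length[OF "1.prems"] "1.prems" by (simp add: reduced_def)
    then obtain ys where ys: "set ys \<subseteq> set xs" "length ys < length xs" "wprod G ys = wprod G xs"
      using shorter_word_exists "1.prems" by blast
    then have "ys \<in> lists S" using "1.prems" by auto
    then show ?thesis using "1.IH" ys by (metis order_trans)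
  qed blast
qed

section \<open>Parabolic subgroups and supports\<close>

lemma par_sub_subgroup: assumes "I \<subseteq> S" shows "subgroup (par_sub G I) G"
proof (rule subgroupI)
  show "par_sub G I \<subseteq> carrier G"
    using assms unfolding par_sub_def by (auto intro: wprod_closed)
  show "par_sub G I \<noteq> {}"
    unfolding par_sub_def by blast
next
  fix x y assume "x \<in> par_sub G I" "y \<in> par_sub G I"
  then obtain xs ys where "xs \<in> lists I" "ys \<in> lists I" "x = wprod G xs" "y = wprod G ys"
    unfolding par_sub_def by blast
  moreover have "xs \<in> lists S" "ys \<in> lists S" using calculation assms by auto
  ultimately have "inv x = wprod G (rev xs)" "x \<otimes> y = wprod G (xs @ ys)"
    and "rev xs \<in> lists I" "xs @ ys \<in> lists I"
    by (auto simp: wprod_rev wprod_append)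
  then show "inv x \<in> par_sub G I" "x \<otimes> y \<in> par_sub G I"
    unfolding par_sub_def by blast+
qed

lemmas par_sub_mult = subgroup.m_closed[OF par_sub_subgroup]
lemmas par_sub_inv = subgroup.m_inv_closed[OF par_sub_subgroup]
lemmas par_sub_carrier = subgroup.mem_carrier[OF par_sub_subgroup]

lemma one_in_par_sub: "\<one> \<in> par_sub G I"
  unfolding par_sub_def by (rule image_eqI[of _ _ "[]"]) auto

lemma generator_in_par_sub: "s \<in> I \<Longrightarrow> s \<in> S \<Longrightarrow> s \<in> par_sub G I"
  unfolding par_sub_def by (rule image_eqI[of _ _ "[s]"]) auto

lemma par_sub_mono: "I \<subseteq> J \<Longrightarrow> par_sub G I \<subseteq> par_sub G J"
  unfolding par_sub_def using lists_mono by blast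

lemma par_sub_empty: "par_sub G {} = {\<one>}"
  unfolding par_sub_def by auto

lemma reduced_word_in_par_sub:
  assumes "I \<subseteq> S" "w \<in> par_sub G I"
  obtains ys where "ys \<in> lists I" "reduced ys" "wprod G ys = w"
proof -
  obtain xs where xs: "xs \<in> lists I" "wprod G xs = w"
    using assms(2) unfolding par_sub_def by blast
  then obtain ys where "reduced ys" "set ys \<subseteq> set xs" "wprod G ys = w"
    using reduced_word_from_letters[of xs] assms(1) by auto
  then show thesis using that xs(1) by auto
qed

lemma generator_in_par_sub_iff:
  assumes "I \<subseteq> S" "s \<in> S" shows "s \<in> par_sub G I \<longleftrightarrow> s \<in> I"
proof
  assume "s \<in> par_sub G I"
  then obtain ys where ys: "ys \<in> lists I" "reduced ys" "wprod G ys = s"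
    using reduced_word_in_par_sub assms(1) by blast
  then have "length ys = 1" using assms(2) by (simp add: reduced_def)
  then obtain y where "ys = [y]" by (metis length_0_conv length_Suc_conv One_nat_def)
  then show "s \<in> I" using ys assms(1) by auto
qed (use assms generator_in_par_sub in blast)

lemma reduced_word_letters:
  assumes I: "I \<subseteq> S" shows "reduced xs \<Longrightarrow> wprod G xs \<in> par_sub G I \<Longrightarrow> set xs \<subseteq> I"
proof (induction xs rule: rev_induct)
  case (snoc s xs)
  have xs: "xs \<in> lists S" and s: "s \<in> S" using snoc.prems by (auto simp: reduced_def)
  have "reduced xs" using reduced_appendD snoc.prems(1) by blast
  let ?w = "wprod G (xs @ [s])"
  have w: "?w = wprod G xs \<otimes> s" using xs s by (simp add: wprod_snoc)
  then have ws: "?w \<otimes> s = wprod G xs" using xs s by (simp add: m_assoc)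
  then have "len (?w \<otimes> s) < len ?w"
    using \<open>reduced xs\<close> snoc.prems(1) by (simp add: reduced_def)
  moreover obtain ys where ys: "ys \<in> lists I" "reduced ys" "wprod G ys = ?w"
    using reduced_word_in_par_sub I snoc.prems(2) by blast
  moreover have "ys \<in> lists S" using ys(1) I by auto
  ultimately obtain as z bs where "ys = as @ z # bs" "?w \<otimes> s = wprod G (as @ bs)"
    using exchange_condition s by metis
  then have ws_par: "?w \<otimes> s \<in> par_sub G I"
    using ys(1) unfolding par_sub_def by auto
  have "s = inv ?w \<otimes> (?w \<otimes> s)" using xs s by simp
  then have "s \<in> par_sub G I"
    using par_sub_mult[OF I par_sub_inv[OF I snoc.prems(2)] ws_par] by simp
  then have "s \<in> I" using generator_in_par_sub_iff I s by blast
  moreover have "set xs \<subseteq> I" using snoc.IH \<open>reduced xs\<close> ws ws_par by simp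
  ultimately show ?case by simp
qed simp

lemma mem_supp_iff: "x \<in> supp G S w \<longleftrightarrow> (\<exists>xs. reduced xs \<and> wprod G xs = w \<and> x \<in> set xs)"
  unfolding supp_def reduced_word_iff by blast

lemma supp_subset_S: "supp G S w \<subseteq> S"
  by (auto simp: mem_supp_iff reduced_def)

lemma finite_supp: "finite (supp G S w)"
  using supp_subset_S finite_S finite_subset by blast

lemma in_par_sub_supp: assumes "w \<in> carrier G" shows "w \<in> par_sub G (supp G S w)"
proof -
  obtain xs where xs: "reduced xs" "wprod G xs = w" using reduced_word_exists assms by blast
  then have "xs \<in> lists (supp G S w)" using mem_supp_iff by blast
  then show ?thesis using xs unfolding par_sub_def by blast
qed

lemma in_par_sub_iff_supp_subset:
  assumes "I \<subseteq> S" "w \<in> carrier G" shows "w \<in> par_sub G I \<longleftrightarrow> supp G S w \<subseteq> I"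
proof
  show "supp G S w \<subseteq> I" if "w \<in> par_sub G I"
  proof
    fix a assume "a \<in> supp G S w"
    then obtain xs where "reduced xs" "wprod G xs = w" "a \<in> set xs"
      using mem_supp_iff by blast
    then show "a \<in> I" using reduced_word_letters[OF assms(1)] that by blast
  qed
  show "supp G S w \<subseteq> I \<Longrightarrow> w \<in> par_sub G I"
    using in_par_sub_supp[OF assms(2)] par_sub_mono by blast
qed

lemma supp_one: "supp G S \<one> = {}"
  using in_par_sub_iff_supp_subset[of "{}" \<one>] one_in_par_sub by simp

lemma supp_mult_additive:
  assumes "x \<in> carrier G" "y \<in> carrier G" "len (x \<otimes> y) = len x + len y"
  shows "supp G S x \<union> supp G S y \<subseteq> supp G S (x \<otimes> y)"
proof
  fix a assume "a \<in> supp G S x \<union> supp G S y"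
  then obtain xs ys where xs: "reduced xs" "wprod G xs = x" and ys: "reduced ys" "wprod G ys = y"
    and a: "a \<in> set (xs @ ys)"
    using mem_supp_iff reduced_word_exists assms(1,2) by (metis Un_iff set_append)
  have "reduced (xs @ ys)" "wprod G (xs @ ys) = x \<otimes> y"
    using xs ys assms(3) by (auto simp: reduced_def wprod_append)
  then show "a \<in> supp G S (x \<otimes> y)" using a mem_supp_iff by blast
qed

section \<open>Minimal coset representatives and parabolic components\<close>

definition coset_min :: "'a set \<Rightarrow> 'a set" where
  "coset_min I = {x \<in> carrier G. \<forall>v\<in>par_sub G I. len x \<le> len (x \<otimes> v)}"

lemma coset_min_carrier: "x \<in> coset_min I \<Longrightarrow> x \<in> carrier G"
  by (simp add: coset_min_def)

lemma one_coset_min: "\<one> \<in> coset_min I"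
  by (simp add: coset_min_def)

lemma len_coset_min_mult_generator:
  assumes I: "I \<subseteq> S" and x: "x \<in> coset_min I"
    and ys: "ys \<in> lists I" and s: "s \<in> I" and red: "reduced (ys @ [s])"
  shows "len (x \<otimes> wprod G ys \<otimes> s) = len (x \<otimes> wprod G ys) + 1"
proof (rule ccontr)
  let ?Y = "wprod G ys"
  have xc: "x \<in> carrier G" using x by (rule coset_min_carrier)
  have ysS: "ys \<in> lists S" and sS: "s \<in> S" using ys s I by auto
  have Yc: "?Y \<in> carrier G" using ysS by simp
  assume "len (x \<otimes> ?Y \<otimes> s) \<noteq> len (x \<otimes> ?Y) + 1"
  then have shorter: "len (x \<otimes> ?Y \<otimes> s) < len (x \<otimes> ?Y)"
    using len_mult_generator[of "x \<otimes> ?Y" s] xc Yc sS by auto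
  obtain xs where xs: "reduced xs" "wprod G xs = x" using reduced_word_exists xc by blast
  have xsS: "xs \<in> lists S" using xs(1) by (simp add: reduced_def)
  consider (left) as z cs where "xs = as @ z # cs" "x \<otimes> ?Y \<otimes> s = wprod G (as @ cs) \<otimes> ?Y"
    | (right) ds z bs where "ys = ds @ z # bs" "?Y \<otimes> s = wprod G (ds @ bs)"
    using exchange_condition_append[OF xsS ysS sS] shorter xs(2) by blast
  then show False
  proof cases
    case left
    let ?C = "wprod G (as @ cs)"
    have "as @ cs \<in> lists S" using xsS left(1) by auto
    then have Cc: "?C \<in> carrier G" and "len ?C < len x"
      using len_le_length[of "as @ cs"] xs left(1) by (simp_all add: reduced_def)
    have "x \<otimes> (?Y \<otimes> s \<otimes> inv ?Y) = (x \<otimes> ?Y \<otimes> s) \<otimes> inv ?Y"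
      using xc Yc sS by (simp add: m_assoc)
    also have "\<dots> = ?C"
      using Cc Yc by (simp add: left(2) m_assoc)
    finally have "len (x \<otimes> (?Y \<otimes> s \<otimes> inv ?Y)) < len x"
      using \<open>len ?C < len x\<close> by simp
    moreover have "?Y \<otimes> s \<otimes> inv ?Y \<in> par_sub G I"
    proof -
      have Y: "?Y \<in> par_sub G I" using ys unfolding par_sub_def by blast
      show ?thesis
        using par_sub_mult[OF I par_sub_mult[OF I Y generator_in_par_sub[OF s sS]]
            par_sub_inv[OF I Y]] .
    qed
    ultimately show False using x by (force simp: coset_min_def)
  next
    case right
    have "ds @ bs \<in> lists S" using ysS right(1) by auto
    have "len (wprod G (ys @ [s])) = len (wprod G (ds @ bs))"
      using right(2) ysS sS by (simp add: wprod_snoc)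
    also have "\<dots> \<le> length (ds @ bs)"
      by (rule len_le_length) fact
    also have "\<dots> < length (ys @ [s])"
      using right(1) by simp
    finally show False using red by (simp add: reduced_def)
  qed
qed

lemma len_coset_min_mult:
  assumes I: "I \<subseteq> S" and x: "x \<in> coset_min I" and y: "y \<in> par_sub G I"
  shows "len (x \<otimes> y) = len x + len y"
proof -
  have "len (x \<otimes> wprod G ys) = len x + length ys" if "ys \<in> lists I" "reduced ys" for ys
    using that
  proof (induction ys rule: rev_induct)
    case Nil then show ?case using coset_min_carrier[OF x] by simp
  next
    case (snoc s ys)
    have ysS: "ys \<in> lists S" and s: "s \<in> S" using snoc.prems I by auto
    have "len (x \<otimes> wprod G ys) = len x + length ys"
      using snoc reduced_appendD(1) by auto
    then show ?case
      using len_coset_min_mult_generator[OF I x _ _ snoc.prems(2)] snoc.prems(1) ysS s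
        coset_min_carrier[OF x] by (simp add: wprod_snoc m_assoc)
  qed
  moreover obtain ys where "ys \<in> lists I" "reduced ys" "wprod G ys = y"
    using reduced_word_in_par_sub I y by blast
  ultimately show ?thesis by (auto simp: reduced_def)
qed

lemma coset_min_subset_min_reps: assumes I: "I \<subseteq> S" shows "coset_min I \<subseteq> min_reps G S I"
proof
  fix x assume x: "x \<in> coset_min I"
  have "len (x \<otimes> s) = len x + 1" if "s \<in> I" for s
    using len_coset_min_mult[OF I x generator_in_par_sub[OF that]] that I by auto
  then show "x \<in> min_reps G S I"
    using coset_min_carrier[OF x] by (simp add: min_reps_def)
qed

lemma coset_min_exists:
  assumes I: "I \<subseteq> S" and w: "w \<in> carrier G"
  obtains v where "v \<in> par_sub G I" "w \<otimes> v \<in> coset_min I"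
proof -
  let ?P = "\<lambda>n. \<exists>v\<in>par_sub G I. len (w \<otimes> v) = n"
  have "?P (len (w \<otimes> \<one>))" using one_in_par_sub by blast
  then have "?P (LEAST n. ?P n)" by (rule LeastI)
  then obtain v where v: "v \<in> par_sub G I" "len (w \<otimes> v) = (LEAST n. ?P n)" by blast
  have vc: "v \<in> carrier G" using par_sub_carrier[OF I v(1)] .
  have "len (w \<otimes> v) \<le> len (w \<otimes> v \<otimes> u)" if u: "u \<in> par_sub G I" for u
  proof -
    have "?P (len (w \<otimes> (v \<otimes> u)))" using par_sub_mult[OF I v(1) u] by blast
    then have "(LEAST n. ?P n) \<le> len (w \<otimes> (v \<otimes> u))" by (rule Least_le)
    then show ?thesis using v(2) w vc par_sub_carrier[OF I u] by (simp add: m_assoc)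
  qed
  then have "w \<otimes> v \<in> coset_min I" using w vc by (simp add: coset_min_def)
  then show thesis using that v(1) by blast
qed

lemma min_reps_subset_coset_min: assumes I: "I \<subseteq> S" shows "min_reps G S I \<subseteq> coset_min I"
proof
  fix x assume x: "x \<in> min_reps G S I"
  have xc: "x \<in> carrier G" using x by (simp add: min_reps_def)
  obtain v where v: "v \<in> par_sub G I" "x \<otimes> v \<in> coset_min I"
    using coset_min_exists I xc by blast
  have vc: "v \<in> carrier G" using par_sub_carrier[OF I v(1)] .
  have x_eq: "(x \<otimes> v) \<otimes> inv v = x" using xc vc by (simp add: m_assoc)
  have len_x: "len x = len (x \<otimes> v) + len (inv v)"
    using len_coset_min_mult[OF I v(2) par_sub_inv[OF I v(1)]] x_eq by simp
  show "x \<in> coset_min I"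
  proof (cases "inv v = \<one>")
    case True
    then show ?thesis using v(2) x_eq coset_min_carrier[OF v(2)] by simp
  next
    case False
    obtain ys where ys: "ys \<in> lists I" "reduced ys" "wprod G ys = inv v"
      using reduced_word_in_par_sub I par_sub_inv[OF I v(1)] by blast
    then obtain ys' s where ys': "ys = ys' @ [s]"
      using False by (metis rev_exhaust wprod_Nil)
    have sI: "s \<in> I" and s: "s \<in> S" and ys'S: "ys' \<in> lists S" using ys(1) ys' I by auto
    let ?Y = "wprod G ys'"
    have Yc: "?Y \<in> carrier G" using ys'S by simp
    have "inv v = ?Y \<otimes> s" using ys(3) ys' ys'S s by (simp add: wprod_snoc)
    then have "inv v \<otimes> s = ?Y" using Yc s by (simp add: m_assoc)
    then have "(x \<otimes> v) \<otimes> ?Y = (x \<otimes> v) \<otimes> (inv v \<otimes> s)" by simp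
    also have "\<dots> = x \<otimes> s" using xc vc s by (simp add: m_assoc)
    finally have "(x \<otimes> v) \<otimes> ?Y = x \<otimes> s" .
    then have "len (x \<otimes> s) \<le> len (x \<otimes> v) + length ys'"
      using len_mult_le[of "x \<otimes> v" ?Y] len_le_length[OF ys'S] xc vc Yc by simp
    also have "\<dots> < len x" using len_x ys ys' by (simp add: reduced_def)
    finally show ?thesis using x sI by (auto simp: min_reps_def)
  qed
qed

lemma min_reps_eq_coset_min: "I \<subseteq> S \<Longrightarrow> min_reps G S I = coset_min I"
  using coset_min_subset_min_reps min_reps_subset_coset_min by blast

lemma par_comp_unique:
  assumes I: "I \<subseteq> S" and w: "w \<in> carrier G"
  shows "\<exists>!v. v \<in> par_sub G I \<and> w \<otimes> inv v \<in> min_reps G S I"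
proof -
  obtain v where v: "v \<in> par_sub G I" "w \<otimes> v \<in> coset_min I"
    using coset_min_exists I w by blast
  have "inv v \<in> par_sub G I" "w \<otimes> inv (inv v) \<in> min_reps G S I"
    using par_sub_inv[OF I v(1)] v(2) par_sub_carrier[OF I v(1)] min_reps_eq_coset_min[OF I]
    by simp_all
  moreover have "v1 = v2"
    if v1: "v1 \<in> par_sub G I" "w \<otimes> inv v1 \<in> coset_min I"
      and v2: "v2 \<in> par_sub G I" "w \<otimes> inv v2 \<in> coset_min I" for v1 v2
  proof -
    have c: "v1 \<in> carrier G" "v2 \<in> carrier G" using v1 v2 par_sub_carrier[OF I] by auto
    have "len (w \<otimes> inv v2) = len (w \<otimes> inv v1) + len (v1 \<otimes> inv v2)"
      using len_coset_min_mult[OF I v1(2) par_sub_mult[OF I v1(1) par_sub_inv[OF I v2(1)]]] c w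
      by (simp add: m_assoc)
    moreover have "len (w \<otimes> inv v1) = len (w \<otimes> inv v2) + len (v2 \<otimes> inv v1)"
      using len_coset_min_mult[OF I v2(2) par_sub_mult[OF I v2(1) par_sub_inv[OF I v1(1)]]] c w
      by (simp add: m_assoc)
    ultimately have "len (v1 \<otimes> inv v2) = 0" by simp
    then have "v1 \<otimes> inv v2 = \<one>" using len_eq_0_iff c by simp
    then show "v1 = v2" using c by (simp add: inv_solve_right')
  qed
  ultimately show ?thesis using min_reps_eq_coset_min[OF I] by blast
qed

lemma par_comp_in_par_sub: "I \<subseteq> S \<Longrightarrow> w \<in> carrier G \<Longrightarrow> par_comp G S I w \<in> par_sub G I"
  and par_comp_coset_min: "I \<subseteq> S \<Longrightarrow> w \<in> carrier G \<Longrightarrow> w \<otimes> inv (par_comp G S I w) \<in> coset_min I"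
  using theI'[OF par_comp_unique] min_reps_eq_coset_min unfolding par_comp_def by auto

lemma par_comp_carrier: "I \<subseteq> S \<Longrightarrow> w \<in> carrier G \<Longrightarrow> par_comp G S I w \<in> carrier G"
  using par_comp_in_par_sub par_sub_carrier by blast

lemma par_comp_eqI:
  assumes "I \<subseteq> S" "w \<in> carrier G" "v \<in> par_sub G I" "w \<otimes> inv v \<in> coset_min I"
  shows "par_comp G S I w = v"
  unfolding par_comp_def using the1_equality[OF par_comp_unique] assms min_reps_eq_coset_min by simp

lemma par_comp_mult:
  assumes I: "I \<subseteq> S" and x: "x \<in> coset_min I" and v: "v \<in> par_sub G I"
  shows "par_comp G S I (x \<otimes> v) = v"
proof -
  have "x \<otimes> v \<otimes> inv v = x"
    using coset_min_carrier[OF x] par_sub_carrier[OF I v] by (simp add: m_assoc)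
  then show ?thesis
    using par_comp_eqI[OF I _ v] x coset_min_carrier[OF x] par_sub_carrier[OF I v] by simp
qed

lemma par_comp_id: "I \<subseteq> S \<Longrightarrow> w \<in> par_sub G I \<Longrightarrow> par_comp G S I w = w"
  using par_comp_mult[OF _ one_coset_min] par_sub_carrier by fastforce

lemma len_par_comp:
  assumes I: "I \<subseteq> S" and w: "w \<in> carrier G"
  shows "len w = len (w \<otimes> inv (par_comp G S I w)) + len (par_comp G S I w)"
proof -
  have "(w \<otimes> inv (par_comp G S I w)) \<otimes> par_comp G S I w = w"
    using par_comp_carrier[OF I w] w by (simp add: m_assoc)
  then show ?thesis
    using len_coset_min_mult[OF I par_comp_coset_min[OF I w] par_comp_in_par_sub[OF I w]] by simp
qed

lemma supp_par_comp_subset: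
  assumes I: "I \<subseteq> S" and w: "w \<in> carrier G"
  shows "supp G S (par_comp G S I w) \<subseteq> supp G S w"
proof -
  let ?c = "par_comp G S I w"
  have c: "?c \<in> carrier G" using par_comp_carrier[OF I w] .
  have x: "w \<otimes> inv ?c \<in> carrier G" using c w by simp
  have eq: "(w \<otimes> inv ?c) \<otimes> ?c = w" using c w by (simp add: m_assoc)
  have "supp G S (w \<otimes> inv ?c) \<union> supp G S ?c \<subseteq> supp G S ((w \<otimes> inv ?c) \<otimes> ?c)"
    using len_par_comp[OF I w] eq by (intro supp_mult_additive[OF x c]) simp
  then show ?thesis using eq by simp
qed

lemma supp_par_comp_subset_I: "I \<subseteq> S \<Longrightarrow> w \<in> carrier G \<Longrightarrow> supp G S (par_comp G S I w) \<subseteq> I"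
  using in_par_sub_iff_supp_subset par_comp_in_par_sub par_comp_carrier by blast

lemma par_comp_par_comp:
  assumes K: "K \<subseteq> J" and J: "J \<subseteq> S" and w: "w \<in> carrier G"
  shows "par_comp G S K (par_comp G S J w) = par_comp G S K w"
proof -
  have KS: "K \<subseteq> S" using K J by blast
  let ?c = "par_comp G S J w" and ?x = "w \<otimes> inv (par_comp G S J w)"
  let ?d = "par_comp G S K ?c"
  let ?y = "?c \<otimes> inv ?d"
  have cc: "?c \<in> carrier G" using par_comp_carrier[OF J w] .
  have cJ: "?c \<in> par_sub G J" and xJ: "?x \<in> coset_min J"
    using par_comp_in_par_sub[OF J w] par_comp_coset_min[OF J w] .
  have dK: "?d \<in> par_sub G K" and yK: "?y \<in> coset_min K"
    using par_comp_in_par_sub[OF KS cc] par_comp_coset_min[OF KS cc] .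
  have yJ: "?y \<in> par_sub G J"
    using par_sub_mult[OF J cJ par_sub_inv[OF J]] par_sub_mono[OF K] dK by blast
  have xc: "?x \<in> carrier G" and yc: "?y \<in> carrier G"
    using xJ yK coset_min_carrier by auto
  have "len (?x \<otimes> ?y \<otimes> s) > len (?x \<otimes> ?y)" if s: "s \<in> K" for s
  proof -
    have ysJ: "?y \<otimes> s \<in> par_sub G J"
      using par_sub_mult[OF J yJ generator_in_par_sub[of s J]] s K KS by blast
    have "len (?x \<otimes> ?y \<otimes> s) = len ?x + len (?y \<otimes> s)"
      using len_coset_min_mult[OF J xJ ysJ] xc yc s KS by (auto simp: m_assoc)
    moreover have "len (?y \<otimes> s) > len ?y"
      using yK s min_reps_eq_coset_min[OF KS] by (auto simp: min_reps_def)
    moreover have "len (?x \<otimes> ?y) = len ?x + len ?y"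
      using len_coset_min_mult[OF J xJ yJ] .
    ultimately show ?thesis by simp
  qed
  then have "?x \<otimes> ?y \<in> coset_min K"
    using min_reps_eq_coset_min[OF KS] xc yc by (auto simp: min_reps_def)
  then have "par_comp G S K ((?x \<otimes> ?y) \<otimes> ?d) = ?d"
    using dK by (rule par_comp_mult[OF KS])
  moreover have "(?x \<otimes> ?y) \<otimes> ?d = w"
    using w cc par_comp_carrier[OF KS cc] by (simp add: m_assoc)
  ultimately show ?thesis by simp
qed

section \<open>The order\<close>

lemma cox_le_carrier: "cox_le G S u v \<Longrightarrow> u \<in> carrier G \<and> v \<in> carrier G"
  by (simp add: cox_le_def)

lemma cox_le_par_comp: "cox_le G S u v \<Longrightarrow> par_comp G S (supp G S u) v = u"
  by (simp add: cox_le_def)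

lemma cox_le_refl: "u \<in> carrier G \<Longrightarrow> cox_le G S u u"
  using par_comp_id[OF supp_subset_S in_par_sub_supp] by (simp add: cox_le_def)

lemma supp_mono: "cox_le G S u v \<Longrightarrow> supp G S u \<subseteq> supp G S v"
  using supp_par_comp_subset[OF supp_subset_S, of v u] by (simp add: cox_le_def)

lemma cox_le_antisym: assumes "cox_le G S u v" "cox_le G S v u" shows "u = v"
proof -
  have "supp G S u = supp G S v" using supp_mono assms by blast
  then have "u = par_comp G S (supp G S v) v" using assms(1) by (simp add: cox_le_def)
  then show ?thesis
    using par_comp_id[OF supp_subset_S in_par_sub_supp] assms(1) by (simp add: cox_le_def)
qed

lemma par_comp_cox_le:
  assumes J: "J \<subseteq> S" and v: "v \<in> carrier G" shows "cox_le G S (par_comp G S J v) v"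
proof -
  let ?c = "par_comp G S J v"
  have c: "?c \<in> carrier G" using par_comp_carrier[OF J v] .
  have "par_comp G S (supp G S ?c) v = par_comp G S (supp G S ?c) ?c"
    using par_comp_par_comp[OF supp_par_comp_subset_I[OF J v] J v] by simp
  also have "\<dots> = ?c" using par_comp_id[OF supp_subset_S in_par_sub_supp[OF c]] .
  finally show ?thesis using c v by (simp add: cox_le_def)
qed

lemma cox_le_iff_supp_subset:
  assumes "cox_le G S u v" "cox_le G S w v"
  shows "cox_le G S u w \<longleftrightarrow> supp G S u \<subseteq> supp G S w"
proof
  assume sub: "supp G S u \<subseteq> supp G S w"
  have "v \<in> carrier G" using assms(1) by (simp add: cox_le_def)
  have "par_comp G S (supp G S u) w = par_comp G S (supp G S u) (par_comp G S (supp G S w) v)"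
    using cox_le_par_comp[OF assms(2)] by simp
  also have "\<dots> = par_comp G S (supp G S u) v"
    by (rule par_comp_par_comp[OF sub supp_subset_S \<open>v \<in> carrier G\<close>])
  finally show "cox_le G S u w" using assms by (simp add: cox_le_def)
qed (rule supp_mono)

lemma supp_par_comp_mono:
  assumes "J \<subseteq> K" "K \<subseteq> S" "v \<in> carrier G"
  shows "supp G S (par_comp G S J v) \<subseteq> supp G S (par_comp G S K v)"
  using supp_par_comp_subset[of J "par_comp G S K v"] par_comp_par_comp[OF assms] assms
    par_comp_carrier[OF assms(2,3)] by simp

lemma one_cox_le: assumes "x \<in> carrier G" shows "cox_le G S \<one> x"
proof -
  have "par_comp G S {} x = \<one>"
    using par_comp_in_par_sub[of "{}" x] assms by (simp add: par_sub_empty)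
  then show ?thesis using par_comp_cox_le[of "{}" x] assms by simp
qed

lemma cox_le_one: assumes "cox_le G S y \<one>" shows "y = \<one>"
proof -
  have "supp G S y = {}" using supp_mono[OF assms] supp_one by blast
  then show ?thesis
    using in_par_sub_supp[of y] assms par_sub_empty by (simp add: cox_le_def)
qed

lemma descent_in_supp:
  assumes "x \<in> carrier G" "x \<noteq> \<one>"
  obtains a where "a \<in> supp G S x" "a \<in> S" "len (x \<otimes> a) < len x"
proof -
  obtain xs where xs: "reduced xs" "wprod G xs = x" using reduced_word_exists assms(1) by blast
  then have "xs \<noteq> []" using assms(2) by auto
  then obtain xs' a where xs': "xs = xs' @ [a]" by (cases xs rule: rev_cases) auto
  have a: "a \<in> S" and xs'S: "xs' \<in> lists S" using xs(1) xs' by (auto simp: reduced_def)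
  have "x = wprod G xs' \<otimes> a" using xs xs' xs'S a by (simp add: wprod_snoc)
  then have "x \<otimes> a = wprod G xs'" using xs'S a by (simp add: m_assoc)
  then have "len (x \<otimes> a) < len x"
    using len_le_length[OF xs'S] xs xs' by (simp add: reduced_def)
  moreover have "a \<in> supp G S x" using xs xs' mem_supp_iff by auto
  ultimately show thesis using that a by blast
qed

lemma supp_par_comp_insert_descent:
  assumes uv: "cox_le G S u v" and a: "a \<in> S" and descent: "len (v \<otimes> inv u \<otimes> a) < len (v \<otimes> inv u)"
  shows "supp G S (par_comp G S (insert a (supp G S u)) v) = insert a (supp G S u)"
proof -
  let ?J = "supp G S u" and ?c = "par_comp G S (insert a (supp G S u)) v"
  have J: "?J \<subseteq> S" and J': "insert a ?J \<subseteq> S" using supp_subset_S a by auto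
  have v: "v \<in> carrier G" using uv by (simp add: cox_le_def)
  have c: "?c \<in> carrier G" using par_comp_carrier[OF J' v] .
  have "a \<in> supp G S ?c"
  proof (rule ccontr)
    assume "a \<notin> supp G S ?c"
    then have "?c \<in> par_sub G ?J"
      using supp_par_comp_subset_I[OF J' v] in_par_sub_iff_supp_subset[OF J c] by blast
    then have "u = ?c"
      using par_comp_par_comp[OF subset_insertI J' v] par_comp_id[OF J] cox_le_par_comp[OF uv]
      by simp
    then have "v \<otimes> inv u \<in> min_reps G S (insert a ?J)"
      using par_comp_coset_min[OF J' v] min_reps_eq_coset_min[OF J'] by simp
    then show False using descent by (force simp: min_reps_def)
  qed
  moreover have "?J \<subseteq> supp G S ?c"
    using supp_par_comp_mono[OF subset_insertI J' v] cox_le_par_comp[OF uv] by simp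
  ultimately show ?thesis using supp_par_comp_subset_I[OF J' v] by blast
qed

lemma cox_le_access:
  assumes uv: "cox_le G S u v" and ne: "u \<noteq> v"
  obtains a where "a \<in> supp G S v" "a \<notin> supp G S u"
    "supp G S (par_comp G S (insert a (supp G S u)) v) = insert a (supp G S u)"
proof -
  let ?J = "supp G S u" and ?x = "v \<otimes> inv u"
  have J: "?J \<subseteq> S" by (rule supp_subset_S)
  have u: "u \<in> carrier G" and v: "v \<in> carrier G" using uv by (simp_all add: cox_le_def)
  have x: "?x \<in> carrier G" using u v by simp
  have "?x \<noteq> \<one>" using inv_solve_right[of \<one> v u] u v ne by auto
  with x obtain a where a_x: "a \<in> supp G S ?x" and a: "a \<in> S" and descent: "len (?x \<otimes> a) < len ?x"
    by (rule descent_in_supp)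
  have "?x \<in> min_reps G S ?J"
    using par_comp_coset_min[OF J v] cox_le_par_comp[OF uv] min_reps_eq_coset_min[OF J] by simp
  then have "a \<notin> ?J" using descent by (force simp: min_reps_def)
  moreover have "a \<in> supp G S v"
  proof -
    have xu: "?x \<otimes> u = v" using u v by (simp add: m_assoc)
    have "len (?x \<otimes> u) = len ?x + len u"
      using len_par_comp[OF J v] cox_le_par_comp[OF uv] xu by simp
    then have "supp G S ?x \<subseteq> supp G S (?x \<otimes> u)"
      using supp_mult_additive[OF x u] by blast
    then show ?thesis using a_x xu by auto
  qed
  ultimately show thesis using that supp_par_comp_insert_descent[OF uv a descent] by blast
qed

definition cox_interval :: "'a \<Rightarrow> 'a \<Rightarrow> 'a set" where
  "cox_interval u v = {w \<in> carrier G. cox_le G S u w \<and> cox_le G S w v}"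

lemma par_comp_in_cox_interval:
  assumes uv: "cox_le G S u v" and J: "J \<subseteq> S" and uJ: "supp G S u \<subseteq> J"
  shows "par_comp G S J v \<in> cox_interval u v"
proof -
  have v: "v \<in> carrier G" using uv by (simp add: cox_le_def)
  have cv: "cox_le G S (par_comp G S J v) v" by (rule par_comp_cox_le[OF J v])
  have "supp G S u \<subseteq> supp G S (par_comp G S J v)"
    using supp_par_comp_mono[OF uJ J v] cox_le_par_comp[OF uv] by simp
  then have "cox_le G S u (par_comp G S J v)" using cox_le_iff_supp_subset[OF uv cv] by simp
  then show ?thesis using cv by (simp add: cox_interval_def cox_le_def)
qed

lemma cox_interval_le_iff_supp_subset:
  assumes "x \<in> cox_interval u v" "y \<in> cox_interval u v"
  shows "cox_le G S x y \<longleftrightarrow> supp G S x \<subseteq> supp G S y"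
  using assms cox_le_iff_supp_subset[of x v y] unfolding cox_interval_def by blast

lemma inj_on_supp_cox_interval: "inj_on (supp G S) (cox_interval u v)"
  by (rule inj_onI) (metis cox_interval_le_iff_supp_subset cox_le_antisym order_refl)

lemma supp_le_par_comp_supp:
  assumes "cox_le G S x v" "supp G S x \<subseteq> J" "J \<subseteq> S"
  shows "supp G S x \<subseteq> supp G S (par_comp G S J v)"
  using supp_par_comp_mono[OF assms(2,3), of v] cox_le_par_comp[OF assms(1)]
    cox_le_carrier[OF assms(1)]
  by simp

lemma union_closed_supp_cox_interval:
  assumes uv: "cox_le G S u v" shows "union_closed (supp G S ` cox_interval u v)"
  unfolding union_closed_def
proof (intro ballI)
  fix X Y assume "X \<in> supp G S ` cox_interval u v" "Y \<in> supp G S ` cox_interval u v"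
  then obtain x y where x: "x \<in> cox_interval u v" and y: "y \<in> cox_interval u v"
    and X_def: "X = supp G S x" and Y_def: "Y = supp G S y" by blast
  have v: "v \<in> carrier G" using uv by (simp add: cox_le_def)
  have J: "X \<union> Y \<subseteq> S" unfolding X_def Y_def using supp_subset_S by blast
  have "supp G S u \<subseteq> X" using x supp_mono unfolding X_def by (simp add: cox_interval_def)
  then have mem: "par_comp G S (X \<union> Y) v \<in> cox_interval u v"
    using par_comp_in_cox_interval[OF uv J] by blast
  have "X \<subseteq> supp G S (par_comp G S (X \<union> Y) v)" "Y \<subseteq> supp G S (par_comp G S (X \<union> Y) v)"
    using supp_le_par_comp_supp[OF _ _ J] x y unfolding X_def Y_def by (auto simp: cox_interval_def)
  then have "X \<union> Y = supp G S (par_comp G S (X \<union> Y) v)"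
    using supp_par_comp_subset_I[OF J v] by blast
  then show "X \<union> Y \<in> supp G S ` cox_interval u v"
    using mem by (rule image_eqI[where f = "supp G S"])
qed

lemma accessible_supp_cox_interval:
  assumes uv: "cox_le G S u v" shows "accessible (supp G S ` cox_interval u v)"
  unfolding accessible_def
proof (intro ballI impI)
  fix X Y assume "X \<in> supp G S ` cox_interval u v" "Y \<in> supp G S ` cox_interval u v" and XY: "X \<subset> Y"
  then obtain x y where x: "x \<in> cox_interval u v" and y: "y \<in> cox_interval u v"
    and X_def: "X = supp G S x" and Y_def: "Y = supp G S y" by blast
  have v: "v \<in> carrier G" using uv by (simp add: cox_le_def)
  have "cox_le G S x y" "x \<noteq> y"
    using cox_interval_le_iff_supp_subset[OF x y] XY unfolding X_def Y_def by auto
  then obtain a where a: "a \<in> supp G S y" "a \<notin> supp G S x"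
    and supp_a: "supp G S (par_comp G S (insert a (supp G S x)) y) = insert a (supp G S x)"
    by (rule cox_le_access)
  have J: "insert a (supp G S x) \<subseteq> supp G S y"
    using a XY unfolding X_def Y_def by blast
  then have JS: "insert a (supp G S x) \<subseteq> S" using supp_subset_S by blast
  have "par_comp G S (insert a (supp G S x)) y = par_comp G S (insert a (supp G S x)) v"
    using par_comp_par_comp[OF J supp_subset_S v] cox_le_par_comp[of y v] y
    by (simp add: cox_interval_def)
  moreover have "supp G S u \<subseteq> insert a (supp G S x)"
    using x supp_mono by (auto simp: cox_interval_def)
  ultimately have "par_comp G S (insert a (supp G S x)) y \<in> cox_interval u v"
    using par_comp_in_cox_interval[OF uv JS] by simp
  then have "insert a X \<in> supp G S ` cox_interval u v"
    unfolding X_def by (rule image_eqI[where f = "supp G S", OF supp_a[symmetric]])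
  then show "\<exists>a\<in>Y - X. insert a X \<in> supp G S ` cox_interval u v"
    using a unfolding X_def Y_def by blast
qed

lemma upper_semimodular_cox_interval:
  assumes uv: "cox_le G S u v"
  shows "upper_semimodular_lattice_on (cox_interval u v) (cox_le G S)"
proof (rule upper_semimodular_lattice_on_image[OF inj_on_supp_cox_interval])
  show "cox_le G S x y \<longleftrightarrow> supp G S x \<subseteq> supp G S y"
    if "x \<in> cox_interval u v" "y \<in> cox_interval u v" for x y
    using cox_interval_le_iff_supp_subset[OF that] .
  have "u \<in> cox_interval u v"
    using uv cox_le_refl[of u] cox_le_carrier[OF uv] by (simp add: cox_interval_def)
  then have least: "supp G S u \<in> supp G S ` cox_interval u v" by blast
  have "supp G S ` cox_interval u v \<subseteq> Pow S" using supp_subset_S by blast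
  then have "finite (supp G S ` cox_interval u v)" using finite_S finite_subset by blast
  moreover have "supp G S u \<subseteq> X" if "X \<in> supp G S ` cox_interval u v" for X
    using that supp_mono by (auto simp: cox_interval_def)
  ultimately show "upper_semimodular_lattice_on (supp G S ` cox_interval u v) (\<subseteq>)"
    using union_closed_supp_cox_interval[OF uv] accessible_supp_cox_interval[OF uv] least
    by (intro upper_semimodular_lattice_on_antimatroid)
qed

lemma covers_supp_insert:
  assumes "covers_in (carrier G) (cox_le G S) u v"
  obtains a where "a \<notin> supp G S u" "supp G S v = insert a (supp G S u)"
proof -
  have uv: "cox_le G S u v" using assms by (simp add: covers_in_def)
  have mem: "u \<in> cox_interval u v" "v \<in> cox_interval u v"
    using uv cox_le_refl by (auto simp: cox_interval_def cox_le_def)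
  then have "covers_in (cox_interval u v) (cox_le G S) u v"
    using assms by (auto simp: covers_in_def cox_interval_def)
  then have "covers_in (supp G S ` cox_interval u v) (\<subseteq>) (supp G S u) (supp G S v)"
    using covers_in_image_iff[of "supp G S" _ "cox_le G S" "(\<subseteq>)",
        OF inj_on_supp_cox_interval cox_interval_le_iff_supp_subset mem]
    by simp
  then show thesis
    using covers_in_subset_insert[OF accessible_supp_cox_interval[OF uv]] that by blast
qed

end

theorem theorem1:
  fixes G :: "('a, 'b) monoid_scheme" and S :: "'a set"
  assumes "coxeter_system G S"
  shows "{x \<in> carrier G. \<not> (\<exists>y\<in>carrier G. cox_le G S y x \<and> y \<noteq> x)} = {\<one>\<^bsub>G\<^esub>}
      \<and> card (supp G S \<one>\<^bsub>G\<^esub>) = 0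
      \<and> (\<forall>u\<in>carrier G. \<forall>v\<in>carrier G. covers_in (carrier G) (cox_le G S) u v \<longrightarrow>
            card (supp G S v) = card (supp G S u) + 1)
      \<and> (\<forall>u\<in>carrier G. \<forall>v\<in>carrier G. cox_le G S u v \<longrightarrow>
            upper_semimodular_lattice_on {w \<in> carrier G. cox_le G S u w \<and> cox_le G S w v} (cox_le G S))"
proof -
  have "group G" using assms by (simp add: coxeter_system_def)
  then interpret coxeter_group G S
    using assms by (simp add: coxeter_group_def coxeter_group_axioms_def)
  have "{x \<in> carrier G. \<not> (\<exists>y\<in>carrier G. cox_le G S y x \<and> y \<noteq> x)} = {\<one>\<^bsub>G\<^esub>}"
    using one_cox_le cox_le_one by auto
  moreover have "card (supp G S v) = card (supp G S u) + 1"
    if "covers_in (carrier G) (cox_le G S) u v" for u v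
    using covers_supp_insert[OF that] finite_supp by (metis card_insert_disjoint Suc_eq_plus1)
  ultimately show ?thesis
    using supp_one upper_semimodular_cox_interval by (simp add: cox_interval_def)
qed

end
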